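(* Let $G$ be a TDLC-group and $P$ a finitely generated projective discrete $\mathbb{Q}[G]$-module. Then the filling pseudo-norm of $P$ is a norm. Moreover, if $P$ is a direct summand of a finitely generated proper permutation module $\mathbb{Q}[\Omega]$, then $P$ is undistorted in $\mathbb{Q}[\Omega]$, i.e. the restriction of $\|\cdot\|_1^\Omega$ to $P$ is equivalent to the filling pseudo-norm of $P$.
   Context: A TDLC-group is a totally disconnected locally compact Hausdorff topological group. A discrete $\mathbb{Q}[G]$-module is a left $\mathbb{Q}[G]$-module in which every element has open stabilizer; projectivity refers to the category of discrete modules, in which a module is projective iff it is a direct summand of a proper permutation module. A $G$-set $\Omega$ is proper if all point stabilizers are compact open; $\mathbb{Q}[\Omega]$ is then a proper permutation module, finitely generated iff $\Omega/G$ is finite, with $\ell_1$-norm $\|\sum a_\omega\omega\|_1^\Omega=\sum|a_\omega|$. For a surjection $\partial:\mathbb{Q}[\Omega]\twoheadrightarrow M$ from a finitely generated proper permutation module, the filling pseudo-norm is $\|m\|_\partial=\inf\{\|x\|_1^\Omega:\partial(x)=m\}$; any two filling pseudo-norms on $M$ are equivalent (equivalence: each bounded by a constant times the other). *)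

theory Defs
  imports "HOL-Analysis.Analysis"
begin

text \<open>TDLC groups: the group is a type of class topological_group_add (additive notation,
  not necessarily commutative), Hausdorff via t2_space; we add total disconnectedness and
  local compactness.\<close>

definition totally_disconnected_space :: "'a::topological_space itself \<Rightarrow> bool" where
  "totally_disconnected_space _ \<longleftrightarrow> (\<forall>S::'a set. connected S \<longrightarrow> (\<exists>a. S \<subseteq> {a}))"

definition tdlc_group :: "'g::{t2_space, topological_group_add} itself \<Rightarrow> bool" where
  "tdlc_group T \<longleftrightarrow> totally_disconnected_space T \<and>
     locally_compact_space (euclidean :: 'g topology)"

definition discrete_QG_module ::
  "(rat \<Rightarrow> 'p::ab_group_add \<Rightarrow> 'p) \<Rightarrow> ('g::{topological_group_add} \<Rightarrow> 'p \<Rightarrow> 'p) \<Rightarrow> bool" where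
  "discrete_QG_module sm act \<longleftrightarrow>
     (\<forall>q x y. sm q (x + y) = sm q x + sm q y) \<and>
     (\<forall>q r x. sm (q + r) x = sm q x + sm r x) \<and>
     (\<forall>q r x. sm (q * r) x = sm q (sm r x)) \<and>
     (\<forall>x. sm 1 x = x) \<and>
     (\<forall>x. act 0 x = x) \<and>
     (\<forall>g h x. act (g + h) x = act g (act h x)) \<and>
     (\<forall>g x y. act g (x + y) = act g x + act g y) \<and>
     (\<forall>g q x. act g (sm q x) = sm q (act g x)) \<and>
     (\<forall>m. open {g. act g m = m})"

inductive_set QG_span ::
  "(rat \<Rightarrow> 'p::ab_group_add \<Rightarrow> 'p) \<Rightarrow> ('g \<Rightarrow> 'p \<Rightarrow> 'p) \<Rightarrow> 'p set \<Rightarrow> 'p set"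
  for sm act F where
  base: "x \<in> F \<Longrightarrow> x \<in> QG_span sm act F"
| zero: "0 \<in> QG_span sm act F"
| add: "x \<in> QG_span sm act F \<Longrightarrow> y \<in> QG_span sm act F \<Longrightarrow> x + y \<in> QG_span sm act F"
| smul: "x \<in> QG_span sm act F \<Longrightarrow> sm q x \<in> QG_span sm act F"
| act: "x \<in> QG_span sm act F \<Longrightarrow> act g x \<in> QG_span sm act F"

definition fin_gen_QG :: "(rat \<Rightarrow> 'p::ab_group_add \<Rightarrow> 'p) \<Rightarrow> ('g \<Rightarrow> 'p \<Rightarrow> 'p) \<Rightarrow> bool" where
  "fin_gen_QG sm act \<longleftrightarrow> (\<exists>F. finite F \<and> QG_span sm act F = UNIV)"

definition G_set :: "'w set \<Rightarrow> ('g::group_add \<Rightarrow> 'w \<Rightarrow> 'w) \<Rightarrow> bool" where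
  "G_set Om a \<longleftrightarrow> (\<forall>g w. w \<in> Om \<longrightarrow> a g w \<in> Om) \<and> (\<forall>w\<in>Om. a 0 w = w) \<and>
     (\<forall>g h w. w \<in> Om \<longrightarrow> a (g + h) w = a g (a h w))"

definition proper_G_set :: "'w set \<Rightarrow> ('g::topological_group_add \<Rightarrow> 'w \<Rightarrow> 'w) \<Rightarrow> bool" where
  "proper_G_set Om a \<longleftrightarrow> G_set Om a \<and>
     (\<forall>w\<in>Om. compact {g. a g w = w} \<and> open {g. a g w = w})"

definition finitely_many_orbits :: "'w set \<Rightarrow> ('g \<Rightarrow> 'w \<Rightarrow> 'w) \<Rightarrow> bool" where
  "finitely_many_orbits Om a \<longleftrightarrow> (\<exists>F. finite F \<and> F \<subseteq> Om \<and> Om = {a g w | g w. w \<in> F})"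

text \<open>The permutation module Q[Om]: finitely supported rational functions on Om
  (x = sum of x w * w), with G acting by translation of the basis.\<close>

definition supp :: "('w \<Rightarrow> rat) \<Rightarrow> 'w set" where
  "supp x = {w. x w \<noteq> 0}"

definition QPerm :: "'w set \<Rightarrow> ('w \<Rightarrow> rat) set" where
  "QPerm Om = {x. finite (supp x) \<and> supp x \<subseteq> Om}"

definition pact :: "'w set \<Rightarrow> ('g::group_add \<Rightarrow> 'w \<Rightarrow> 'w) \<Rightarrow> 'g \<Rightarrow> ('w \<Rightarrow> rat) \<Rightarrow> ('w \<Rightarrow> rat)" where
  "pact Om a g x = (\<lambda>w. if w \<in> Om then x (a (- g) w) else 0)"

definition l1_norm :: "('w \<Rightarrow> rat) \<Rightarrow> real" where
  "l1_norm x = (\<Sum>w\<in>supp x. real_of_rat \<bar>x w\<bar>)"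

definition hom_from_perm ::
  "'w set \<Rightarrow> ('g::group_add \<Rightarrow> 'w \<Rightarrow> 'w) \<Rightarrow> (rat \<Rightarrow> 'p::ab_group_add \<Rightarrow> 'p) \<Rightarrow> ('g \<Rightarrow> 'p \<Rightarrow> 'p)
   \<Rightarrow> (('w \<Rightarrow> rat) \<Rightarrow> 'p) \<Rightarrow> bool" where
  "hom_from_perm Om a sm act d \<longleftrightarrow>
     (\<forall>x\<in>QPerm Om. \<forall>y\<in>QPerm Om. d (\<lambda>w. x w + y w) = d x + d y) \<and>
     (\<forall>x\<in>QPerm Om. \<forall>q. d (\<lambda>w. q * x w) = sm q (d x)) \<and>
     (\<forall>x\<in>QPerm Om. \<forall>g. d (pact Om a g x) = act g (d x))"

definition hom_to_perm ::
  "'w set \<Rightarrow> ('g::group_add \<Rightarrow> 'w \<Rightarrow> 'w) \<Rightarrow> (rat \<Rightarrow> 'p::ab_group_add \<Rightarrow> 'p) \<Rightarrow> ('g \<Rightarrow> 'p \<Rightarrow> 'p)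
   \<Rightarrow> ('p \<Rightarrow> ('w \<Rightarrow> rat)) \<Rightarrow> bool" where
  "hom_to_perm Om a sm act i \<longleftrightarrow>
     (\<forall>m. i m \<in> QPerm Om) \<and>
     (\<forall>m n. i (m + n) = (\<lambda>w. i m w + i n w)) \<and>
     (\<forall>m q. i (sm q m) = (\<lambda>w. q * i m w)) \<and>
     (\<forall>m g. i (act g m) = pact Om a g (i m))"

definition direct_summand_of_perm ::
  "'w set \<Rightarrow> ('g::group_add \<Rightarrow> 'w \<Rightarrow> 'w) \<Rightarrow> (rat \<Rightarrow> 'p::ab_group_add \<Rightarrow> 'p) \<Rightarrow> ('g \<Rightarrow> 'p \<Rightarrow> 'p)
   \<Rightarrow> ('p \<Rightarrow> ('w \<Rightarrow> rat)) \<Rightarrow> (('w \<Rightarrow> rat) \<Rightarrow> 'p) \<Rightarrow> bool" where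
  "direct_summand_of_perm Om a sm act i p \<longleftrightarrow>
     hom_to_perm Om a sm act i \<and> hom_from_perm Om a sm act p \<and> (\<forall>m. p (i m) = m)"

definition filling_norm :: "'w set \<Rightarrow> (('w \<Rightarrow> rat) \<Rightarrow> 'p) \<Rightarrow> 'p \<Rightarrow> real" where
  "filling_norm Om d m = Inf (l1_norm ` {x \<in> QPerm Om. d x = m})"

end

theory Submission
  imports Defs
begin

text \<open>Every element of \<open>\<rat>[\<Omega>]\<close> is a finite combination \<open>\<Sum> y\<^sub>w w\<close> of basis points, the basis
  points form finitely many \<open>G\<close>-orbits, and \<open>G\<close> acts on \<open>\<rat>[\<Omega>']\<close> by \<open>\<ell>\<^sub>1\<close>-isometries. Hence a
  \<open>\<rat>[G]\<close>-linear map \<open>\<rat>[\<Omega>] \<rightarrow> \<rat>[\<Omega>']\<close> is \<open>\<ell>\<^sub>1\<close>-bounded by the largest norm of the images of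
  orbit representatives, and a \<open>\<rat>[G]\<close>-linear map \<open>\<rat>[\<Omega>] \<rightarrow> P\<close> has a bounded lift through
  any surjection \<open>\<partial> : \<rat>[\<Omega>'] \<rightarrow> P\<close>, obtained by translating lifts of the representatives.
  For a summand \<open>i : P \<rightarrow> \<rat>[\<Omega>]\<close> with retraction \<open>p\<close>, the first fact applied to \<open>i \<circ> \<partial>\<close> gives
  \<open>\<parallel>i m\<parallel>\<^sub>1 \<le> K \<parallel>m\<parallel>\<^sub>\<partial>\<close>, so \<open>\<parallel>m\<parallel>\<^sub>\<partial> = 0\<close> forces \<open>i m = 0\<close> and \<open>m = p (i m) = 0\<close>; the second,
  applied to \<open>p\<close>, gives \<open>\<parallel>m\<parallel>\<^sub>\<partial> \<le> K \<parallel>i m\<parallel>\<^sub>1\<close>.\<close>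

section \<open>Finitely supported functions and the \<open>\<ell>\<^sub>1\<close>-norm\<close>

definition lin_ext :: "('w \<Rightarrow> 'u \<Rightarrow> rat) \<Rightarrow> ('w \<Rightarrow> rat) \<Rightarrow> 'u \<Rightarrow> rat" where
  "lin_ext L y = (\<lambda>v. \<Sum>w\<in>supp y. y w * L w v)"

lemma QPerm_finite_supp: "x \<in> QPerm Om \<Longrightarrow> finite (supp x)"
  and QPerm_supp_subset: "x \<in> QPerm Om \<Longrightarrow> supp x \<subseteq> Om"
  by (simp_all add: QPerm_def)

lemma QPerm_zero: "(\<lambda>_. 0) \<in> QPerm Om"
  by (simp add: QPerm_def supp_def)

lemma supp_indicator: "supp (indicator {w} :: _ \<Rightarrow> rat) = {w}"
  by (auto simp: supp_def indicator_def)

lemma QPerm_indicator: "w \<in> Om \<Longrightarrow> (indicator {w} :: _ \<Rightarrow> rat) \<in> QPerm Om"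
  by (simp add: QPerm_def supp_indicator)

lemma QPerm_scale: "x \<in> QPerm Om \<Longrightarrow> (\<lambda>v. q * x v) \<in> QPerm Om"
  unfolding QPerm_def supp_def by (auto intro: finite_subset)

lemma supp_add_subset: "supp (\<lambda>v. x v + y v) \<subseteq> supp x \<union> supp y"
  by (auto simp: supp_def)

lemma QPerm_add: "x \<in> QPerm Om \<Longrightarrow> y \<in> QPerm Om \<Longrightarrow> (\<lambda>v. x v + y v) \<in> QPerm Om"
  unfolding QPerm_def using supp_add_subset[of x y] by (auto intro: finite_subset)

lemma QPerm_sum:
  "finite S \<Longrightarrow> (\<And>j. j \<in> S \<Longrightarrow> f j \<in> QPerm Om) \<Longrightarrow> (\<lambda>v. \<Sum>j\<in>S. f j v) \<in> QPerm Om"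
  by (induction S rule: finite_induct) (simp_all add: QPerm_zero QPerm_add)

lemma QPerm_lin_ext:
  assumes "y \<in> QPerm Om" and "\<And>w. w \<in> supp y \<Longrightarrow> L w \<in> QPerm Om'"
  shows "lin_ext L y \<in> QPerm Om'"
  unfolding lin_ext_def
  using QPerm_finite_supp[OF assms(1)] by (rule QPerm_sum) (rule QPerm_scale[OF assms(2)])

lemma lin_ext_indicator:
  assumes "finite (supp y)"
  shows "lin_ext (\<lambda>w. indicator {w}) y = y"
proof
  fix v
  have "lin_ext (\<lambda>w. indicator {w}) y v = (\<Sum>w\<in>supp y. if w = v then y v else 0)"
    unfolding lin_ext_def by (rule sum.cong) (auto simp: indicator_def)
  also have "\<dots> = y v" using assms by (simp add: supp_def)
  finally show "lin_ext (\<lambda>w. indicator {w}) y v = y v" .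
qed

lemma l1_norm_nonneg: "0 \<le> l1_norm x"
  unfolding l1_norm_def by (rule sum_nonneg) simp

lemma l1_norm_eq_sum:
  "finite S \<Longrightarrow> supp x \<subseteq> S \<Longrightarrow> l1_norm x = (\<Sum>w\<in>S. real_of_rat \<bar>x w\<bar>)"
  unfolding l1_norm_def by (rule sum.mono_neutral_left) (auto simp: supp_def)

lemma l1_norm_eq_0_iff: "finite (supp x) \<Longrightarrow> l1_norm x = 0 \<longleftrightarrow> x = (\<lambda>_. 0)"
  by (auto simp: l1_norm_def sum_nonneg_eq_0_iff supp_def fun_eq_iff)

lemma l1_norm_add_le:
  assumes "x \<in> QPerm Om" and "y \<in> QPerm Om"
  shows "l1_norm (\<lambda>v. x v + y v) \<le> l1_norm x + l1_norm y"
proof -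
  let ?S = "supp x \<union> supp y"
  have S: "finite ?S" using assms by (simp add: QPerm_finite_supp)
  have "l1_norm (\<lambda>v. x v + y v) = (\<Sum>w\<in>?S. real_of_rat \<bar>x w + y w\<bar>)"
    by (rule l1_norm_eq_sum[OF S supp_add_subset])
  also have "\<dots> \<le> (\<Sum>w\<in>?S. real_of_rat \<bar>x w\<bar> + real_of_rat \<bar>y w\<bar>)"
    by (rule sum_mono) (metis abs_triangle_ineq of_rat_add of_rat_less_eq)
  also have "\<dots> = l1_norm x + l1_norm y"
    by (simp add: sum.distrib l1_norm_eq_sum[OF S])
  finally show ?thesis .
qed

lemma l1_norm_scale: "l1_norm (\<lambda>v. q * x v) = real_of_rat \<bar>q\<bar> * l1_norm x"
proof (cases "q = 0")
  case False
  then have "supp (\<lambda>v. q * x v) = supp x" by (auto simp: supp_def)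
  then show ?thesis by (simp add: l1_norm_def sum_distrib_left abs_mult of_rat_mult)
qed (simp add: l1_norm_def supp_def)

lemma l1_norm_sum_le:
  "finite S \<Longrightarrow> (\<And>j. j \<in> S \<Longrightarrow> f j \<in> QPerm Om) \<Longrightarrow>
   l1_norm (\<lambda>v. \<Sum>j\<in>S. f j v) \<le> (\<Sum>j\<in>S. l1_norm (f j))"
proof (induction S rule: finite_induct)
  case (insert j S)
  have "l1_norm (\<lambda>v. \<Sum>i\<in>insert j S. f i v) = l1_norm (\<lambda>v. f j v + (\<Sum>i\<in>S. f i v))"
    using insert.hyps by simp
  also have "\<dots> \<le> l1_norm (f j) + l1_norm (\<lambda>v. \<Sum>i\<in>S. f i v)"
    using insert by (intro l1_norm_add_le QPerm_sum) auto
  also have "\<dots> \<le> l1_norm (f j) + (\<Sum>i\<in>S. l1_norm (f i))"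
    using insert by simp
  finally show ?case using insert.hyps by simp
qed (simp add: l1_norm_def supp_def)

lemma l1_norm_lin_ext_le:
  assumes "y \<in> QPerm Om" and "\<And>w. w \<in> supp y \<Longrightarrow> L w \<in> QPerm Om'"
    and "\<And>w. w \<in> supp y \<Longrightarrow> l1_norm (L w) \<le> K"
  shows "l1_norm (lin_ext L y) \<le> K * l1_norm y"
proof -
  have "l1_norm (lin_ext L y) \<le> (\<Sum>w\<in>supp y. l1_norm (\<lambda>v. y w * L w v))"
    unfolding lin_ext_def
    by (rule l1_norm_sum_le[OF QPerm_finite_supp[OF assms(1)]]) (rule QPerm_scale[OF assms(2)])
  also have "\<dots> \<le> (\<Sum>w\<in>supp y. real_of_rat \<bar>y w\<bar> * K)"
    by (rule sum_mono) (simp add: l1_norm_scale assms(3) mult_left_mono)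
  also have "\<dots> = K * l1_norm y"
    by (simp add: l1_norm_def sum_distrib_left mult.commute)
  finally show ?thesis .
qed

section \<open>Permutation modules\<close>

lemma G_set_closed: "G_set Om a \<Longrightarrow> w \<in> Om \<Longrightarrow> a g w \<in> Om"
  by (simp add: G_set_def)

lemma G_set_inverse_left: "G_set Om a \<Longrightarrow> w \<in> Om \<Longrightarrow> a (- g) (a g w) = w"
  unfolding G_set_def by (metis add.left_inverse)

lemma G_set_inverse_right: "G_set Om a \<Longrightarrow> w \<in> Om \<Longrightarrow> a g (a (- g) w) = w"
  unfolding G_set_def by (metis add.right_inverse)

lemma supp_pact:
  assumes G: "G_set Om a" and x: "x \<in> QPerm Om"
  shows "supp (pact Om a g x) = a g ` supp x"
proof (intro set_eqI iffI)
  fix v assume "v \<in> supp (pact Om a g x)"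
  then have "v \<in> Om" "a (- g) v \<in> supp x"
    by (auto simp: supp_def pact_def split: if_splits)
  then show "v \<in> a g ` supp x"
    using G_set_inverse_right[OF G] by (metis image_eqI)
next
  fix v assume "v \<in> a g ` supp x"
  then obtain w where "w \<in> supp x" "v = a g w" by auto
  moreover have "w \<in> Om" using \<open>w \<in> supp x\<close> QPerm_supp_subset[OF x] by auto
  ultimately show "v \<in> supp (pact Om a g x)"
    by (simp add: supp_def pact_def G_set_closed[OF G] G_set_inverse_left[OF G])
qed

lemma QPerm_pact: "G_set Om a \<Longrightarrow> x \<in> QPerm Om \<Longrightarrow> pact Om a g x \<in> QPerm Om"
  by (auto simp: supp_pact QPerm_def G_set_closed)

lemma pact_indicator:
  assumes G: "G_set Om a" and w: "w \<in> Om"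
  shows "pact Om a g (indicator {w}) = indicator {a g w}"
  using G_set_inverse_left[OF G w] G_set_inverse_right[OF G] G_set_closed[OF G w]
  by (auto simp: fun_eq_iff pact_def indicator_def)

lemma l1_norm_pact:
  assumes G: "G_set Om a" and x: "x \<in> QPerm Om"
  shows "l1_norm (pact Om a g x) = l1_norm x"
proof -
  have sO: "supp x \<subseteq> Om" by (rule QPerm_supp_subset[OF x])
  have inj: "inj_on (a g) (supp x)"
    using G_set_inverse_left[OF G] sO by (metis inj_on_inverseI subsetD)
  have "l1_norm (pact Om a g x) = (\<Sum>w\<in>supp x. real_of_rat \<bar>pact Om a g x (a g w)\<bar>)"
    unfolding l1_norm_def supp_pact[OF G x] by (simp add: sum.reindex[OF inj])
  also have "\<dots> = l1_norm x"
    unfolding l1_norm_def using sO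
    by (intro sum.cong) (auto simp: pact_def G_set_closed[OF G] G_set_inverse_left[OF G])
  finally show ?thesis .
qed

lemma hom_from_perm_add:
  "hom_from_perm Om a sm act d \<Longrightarrow> x \<in> QPerm Om \<Longrightarrow> y \<in> QPerm Om \<Longrightarrow>
   d (\<lambda>v. x v + y v) = d x + d y"
  and hom_from_perm_scale:
  "hom_from_perm Om a sm act d \<Longrightarrow> x \<in> QPerm Om \<Longrightarrow> d (\<lambda>v. q * x v) = sm q (d x)"
  and hom_from_perm_pact:
  "hom_from_perm Om a sm act d \<Longrightarrow> x \<in> QPerm Om \<Longrightarrow> d (pact Om a g x) = act g (d x)"
  by (simp_all add: hom_from_perm_def)

lemma hom_to_perm_mem: "hom_to_perm Om a sm act i \<Longrightarrow> i m \<in> QPerm Om"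
  and hom_to_perm_add: "hom_to_perm Om a sm act i \<Longrightarrow> i (m + n) = (\<lambda>v. i m v + i n v)"
  and hom_to_perm_scale: "hom_to_perm Om a sm act i \<Longrightarrow> i (sm q m) = (\<lambda>v. q * i m v)"
  and hom_to_perm_act: "hom_to_perm Om a sm act i \<Longrightarrow> i (act g m) = pact Om a g (i m)"
  by (simp_all add: hom_to_perm_def)

lemma hom_from_perm_zero: "hom_from_perm Om a sm act d \<Longrightarrow> d (\<lambda>_. 0) = 0"
  using hom_from_perm_add[OF _ QPerm_zero QPerm_zero] by fastforce

lemma hom_from_perm_sum:
  assumes d: "hom_from_perm Om a sm act d"
  shows "finite S \<Longrightarrow> (\<And>j. j \<in> S \<Longrightarrow> f j \<in> QPerm Om) \<Longrightarrow>
    d (\<lambda>v. \<Sum>j\<in>S. f j v) = (\<Sum>j\<in>S. d (f j))"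
proof (induction S rule: finite_induct)
  case (insert j S)
  then have "d (\<lambda>v. f j v + (\<Sum>i\<in>S. f i v)) = d (f j) + d (\<lambda>v. \<Sum>i\<in>S. f i v)"
    by (intro hom_from_perm_add[OF d] QPerm_sum) auto
  with insert show ?case by simp
qed (simp add: hom_from_perm_zero[OF d])

lemma hom_from_perm_lin_ext:
  assumes d: "hom_from_perm Om' a sm act d" and y: "y \<in> QPerm Om"
    and L: "\<And>w. w \<in> supp y \<Longrightarrow> L w \<in> QPerm Om'"
  shows "d (lin_ext L y) = (\<Sum>w\<in>supp y. sm (y w) (d (L w)))"
  unfolding lin_ext_def
  by (simp add: hom_from_perm_sum[OF d QPerm_finite_supp[OF y]] QPerm_scale L
      hom_from_perm_scale[OF d])

lemma hom_from_perm_expand: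
  assumes d: "hom_from_perm Om a sm act d" and y: "y \<in> QPerm Om"
  shows "d y = (\<Sum>w\<in>supp y. sm (y w) (d (indicator {w})))"
proof -
  have "d y = d (lin_ext (\<lambda>w. indicator {w}) y)"
    by (simp add: lin_ext_indicator[OF QPerm_finite_supp[OF y]])
  also have "\<dots> = (\<Sum>w\<in>supp y. sm (y w) (d (indicator {w})))"
    using QPerm_supp_subset[OF y] by (intro hom_from_perm_lin_ext[OF d y] QPerm_indicator) auto
  finally show ?thesis .
qed

lemma hom_to_perm_zero:
  assumes "hom_to_perm Om a sm act i" shows "i 0 = (\<lambda>_. 0)"
  using hom_to_perm_add[OF assms, of 0 0] by (simp add: fun_eq_iff)

lemma hom_to_perm_sum:
  assumes i: "hom_to_perm Om a sm act i"
  shows "finite S \<Longrightarrow> i (\<Sum>j\<in>S. m j) = (\<lambda>v. \<Sum>j\<in>S. i (m j) v)"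
  by (induction S rule: finite_induct) (simp_all add: hom_to_perm_zero[OF i] hom_to_perm_add[OF i])

lemma hom_to_perm_comp_from:
  assumes d: "hom_from_perm Om a sm act d" and i: "hom_to_perm Om' a' sm act i"
    and y: "y \<in> QPerm Om"
  shows "i (d y) = lin_ext (\<lambda>w. i (d (indicator {w}))) y"
  by (simp add: hom_from_perm_expand[OF d y] hom_to_perm_sum[OF i] QPerm_finite_supp[OF y]
      hom_to_perm_scale[OF i] lin_ext_def)

lemma hom_to_perm_comp_from_indicator:
  assumes G: "G_set Om a" and d: "hom_from_perm Om a sm act d" and i: "hom_to_perm Om' a' sm act i"
    and w: "w \<in> Om"
  shows "i (d (indicator {a g w})) = pact Om' a' g (i (d (indicator {w})))"
  by (simp add: pact_indicator[OF G w, symmetric] hom_from_perm_pact[OF d QPerm_indicator[OF w]]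
      hom_to_perm_act[OF i])

section \<open>Uniform bounds from finitely many orbits\<close>

lemma finitely_many_orbits_uniform_choice:
  fixes N :: "'u \<Rightarrow> real"
  assumes orb: "finitely_many_orbits Om a"
    and ex: "\<And>w. w \<in> Om \<Longrightarrow> \<exists>u. P w u"
    and transl: "\<And>g w u. w \<in> Om \<Longrightarrow> P w u \<Longrightarrow> P (a g w) (T g u) \<and> N (T g u) \<le> N u"
  shows "\<exists>K L. \<forall>w\<in>Om. P w (L w) \<and> N (L w) \<le> K"
proof -
  obtain F where F: "finite F" "F \<subseteq> Om" and Om: "Om = {a g w | g w. w \<in> F}"
    using orb unfolding finitely_many_orbits_def by blast
  obtain u where u: "\<forall>w\<in>F. P w (u w)"
    using bchoice[of F P] ex F(2) by blast
  define K where "K = Max ((\<lambda>w. N (u w)) ` F)"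
  have "\<forall>w\<in>Om. \<exists>v. P w v \<and> N v \<le> K"
  proof
    fix w assume "w \<in> Om"
    then obtain g w0 where w0: "w0 \<in> F" "w = a g w0" using Om by blast
    have K: "N (u w0) \<le> K" unfolding K_def using w0(1) F(1) by simp
    have "P w (T g (u w0)) \<and> N (T g (u w0)) \<le> N (u w0)"
      unfolding w0(2) using transl u w0(1) F(2) by blast
    with K show "\<exists>v. P w v \<and> N v \<le> K" by (meson order_trans)
  qed
  then show ?thesis by (rule bchoice[THEN exE]) blast
qed

lemma hom_comp_l1_bounded:
  assumes G: "G_set Om a" and orb: "finitely_many_orbits Om a"
    and d: "hom_from_perm Om a sm act d"
    and G': "G_set Om' a'" and i: "hom_to_perm Om' a' sm act i"
  shows "\<exists>K>0. \<forall>x\<in>QPerm Om. l1_norm (i (d x)) \<le> K * l1_norm x"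
proof -
  let ?image = "\<lambda>w u. u = i (d (indicator {w}))"
  have "\<exists>K L. \<forall>w\<in>Om. ?image w (L w) \<and> l1_norm (L w) \<le> K"
    by (rule finitely_many_orbits_uniform_choice[OF orb, where T = "pact Om' a'"])
      (simp_all add: hom_to_perm_comp_from_indicator[OF G d i]
        l1_norm_pact[OF G' hom_to_perm_mem[OF i]])
  then obtain K L where L: "\<forall>w\<in>Om. ?image w (L w) \<and> l1_norm (L w) \<le> K" by blast
  have "l1_norm (i (d x)) \<le> max K 1 * l1_norm x" if x: "x \<in> QPerm Om" for x
    unfolding hom_to_perm_comp_from[OF d i x]
  proof (rule l1_norm_lin_ext_le[OF x hom_to_perm_mem[OF i]])
    fix w assume "w \<in> supp x"
    then have "w \<in> Om" using QPerm_supp_subset[OF x] by blast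
    with L have "l1_norm (i (d (indicator {w}))) \<le> K" by fastforce
    then show "l1_norm (i (d (indicator {w}))) \<le> max K 1" by linarith
  qed
  then show ?thesis by (intro exI[of _ "max K 1"]) auto
qed

lemma hom_from_perm_bounded_lift:
  assumes G: "G_set Om a" and orb: "finitely_many_orbits Om a"
    and p: "hom_from_perm Om a sm act p"
    and G': "G_set Om' a'" and d: "hom_from_perm Om' a' sm act d"
    and surj: "d ` QPerm Om' = UNIV"
  shows "\<exists>K>0. \<forall>y\<in>QPerm Om. \<exists>x\<in>QPerm Om'. d x = p y \<and> l1_norm x \<le> K * l1_norm y"
proof -
  let ?lift = "\<lambda>w u. u \<in> QPerm Om' \<and> d u = p (indicator {w})"
  have transl: "?lift (a g w) (pact Om' a' g u) \<and> l1_norm (pact Om' a' g u) \<le> l1_norm u"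
    if w: "w \<in> Om" and u: "?lift w u" for g w u
  proof -
    have "d (pact Om' a' g u) = act g (p (indicator {w}))"
      using u by (simp add: hom_from_perm_pact[OF d])
    also have "\<dots> = p (indicator {a g w})"
      by (simp add: pact_indicator[OF G w, symmetric] hom_from_perm_pact[OF p QPerm_indicator[OF w]])
    finally show ?thesis using u by (simp add: QPerm_pact[OF G'] l1_norm_pact[OF G'])
  qed
  have ex: "\<exists>u. ?lift w u" for w
    using surj by (metis UNIV_I imageE)
  obtain K L where L: "\<forall>w\<in>Om. ?lift w (L w) \<and> l1_norm (L w) \<le> K"
    using finitely_many_orbits_uniform_choice[OF orb,
        where P = ?lift and T = "pact Om' a'" and N = l1_norm] ex transl by blast
  have "lin_ext L y \<in> QPerm Om' \<and> d (lin_ext L y) = p y \<and>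
      l1_norm (lin_ext L y) \<le> max K 1 * l1_norm y"
    if y: "y \<in> QPerm Om" for y
  proof -
    have Ly: "L w \<in> QPerm Om'" "d (L w) = p (indicator {w})" "l1_norm (L w) \<le> max K 1"
      if "w \<in> supp y" for w
      using L QPerm_supp_subset[OF y] that by force+
    have "d (lin_ext L y) = (\<Sum>w\<in>supp y. sm (y w) (p (indicator {w})))"
      by (simp add: hom_from_perm_lin_ext[OF d y] Ly)
    also have "\<dots> = p y" by (rule hom_from_perm_expand[OF p y, symmetric])
    finally show ?thesis
      using Ly QPerm_lin_ext[OF y] l1_norm_lin_ext_le[OF y] by blast
  qed
  then show ?thesis by (intro exI[of _ "max K 1"]) auto
qed

lemma le_filling_norm_iff:
  assumes "d ` QPerm Om = UNIV"
  shows "c \<le> filling_norm Om d m \<longleftrightarrow> (\<forall>x\<in>QPerm Om. d x = m \<longrightarrow> c \<le> l1_norm x)"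
proof -
  obtain x where "x \<in> QPerm Om" "d x = m" using assms by (metis UNIV_I imageE)
  then have "l1_norm ` {x \<in> QPerm Om. d x = m} \<noteq> {}" by blast
  moreover have "bdd_below (l1_norm ` {x \<in> QPerm Om. d x = m})"
    by (rule bdd_belowI2[of _ 0]) (rule l1_norm_nonneg)
  ultimately show ?thesis
    unfolding filling_norm_def by (auto simp: le_cInf_iff)
qed

lemma filling_norm_le:
  "x \<in> QPerm Om \<Longrightarrow> filling_norm Om d (d x) \<le> l1_norm x"
  unfolding filling_norm_def
  by (rule cInf_lower) (auto intro: bdd_belowI2[of _ 0] l1_norm_nonneg)

lemma filling_norm_nonneg: "d ` QPerm Om = UNIV \<Longrightarrow> 0 \<le> filling_norm Om d m"
  by (simp add: le_filling_norm_iff l1_norm_nonneg)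

lemma l1_norm_hom_to_perm_le_filling_norm:
  assumes G: "G_set Om a" and orb: "finitely_many_orbits Om a"
    and d: "hom_from_perm Om a sm act d" and surj: "d ` QPerm Om = UNIV"
    and G': "G_set Om' a'" and i: "hom_to_perm Om' a' sm act i"
  shows "\<exists>K>0. \<forall>m. l1_norm (i m) \<le> K * filling_norm Om d m"
proof -
  obtain K where K: "K > 0" "\<forall>x\<in>QPerm Om. l1_norm (i (d x)) \<le> K * l1_norm x"
    using hom_comp_l1_bounded[OF G orb d G' i] by blast
  have "l1_norm (i m) / K \<le> filling_norm Om d m" for m
    unfolding le_filling_norm_iff[OF surj]
    using K by (auto simp: pos_divide_le_eq mult.commute)
  with K(1) show ?thesis by (auto simp: pos_divide_le_eq mult.commute)
qed

lemma filling_norm_definite: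
  assumes G: "G_set Om a" and orb: "finitely_many_orbits Om a"
    and d: "hom_from_perm Om a sm act d" and surj: "d ` QPerm Om = UNIV"
    and G0: "G_set Om0 a0" and summand: "direct_summand_of_perm Om0 a0 sm act i0 p0"
    and "filling_norm Om d m = 0"
  shows "m = 0"
proof -
  have i0: "hom_to_perm Om0 a0 sm act i0" and p0: "hom_from_perm Om0 a0 sm act p0"
    and retract: "p0 (i0 m) = m"
    using summand by (simp_all add: direct_summand_of_perm_def)
  obtain K where "\<forall>m. l1_norm (i0 m) \<le> K * filling_norm Om d m"
    using l1_norm_hom_to_perm_le_filling_norm[OF G orb d surj G0 i0] by blast
  then have "l1_norm (i0 m) = 0"
    using \<open>filling_norm Om d m = 0\<close> l1_norm_nonneg[of "i0 m"] by (metis mult_zero_right order_antisym)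
  then have "i0 m = (\<lambda>_. 0)"
    using l1_norm_eq_0_iff QPerm_finite_supp[OF hom_to_perm_mem[OF i0]] by blast
  then show "m = 0" using retract hom_from_perm_zero[OF p0] by simp
qed

lemma direct_summand_undistorted:
  assumes G: "G_set Om a" and orb: "finitely_many_orbits Om a"
    and summand: "direct_summand_of_perm Om a sm act i p"
    and G': "G_set Om' a'" and orb': "finitely_many_orbits Om' a'"
    and d: "hom_from_perm Om' a' sm act d" and surj: "d ` QPerm Om' = UNIV"
  shows "\<exists>C>0. \<forall>m. l1_norm (i m) \<le> C * filling_norm Om' d m \<and>
                  filling_norm Om' d m \<le> C * l1_norm (i m)"
proof -
  have i: "hom_to_perm Om a sm act i" and p: "hom_from_perm Om a sm act p"
    and retract: "\<And>m. p (i m) = m"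
    using summand by (simp_all add: direct_summand_of_perm_def)
  obtain K1 where K1: "K1 > 0" "\<forall>m. l1_norm (i m) \<le> K1 * filling_norm Om' d m"
    using l1_norm_hom_to_perm_le_filling_norm[OF G' orb' d surj G i] by blast
  obtain K2 where K2: "\<forall>y\<in>QPerm Om. \<exists>x\<in>QPerm Om'. d x = p y \<and> l1_norm x \<le> K2 * l1_norm y"
    using hom_from_perm_bounded_lift[OF G orb p G' d surj] by blast
  have upper: "filling_norm Om' d m \<le> K2 * l1_norm (i m)" for m
  proof -
    obtain x where x: "x \<in> QPerm Om'" "d x = p (i m)" "l1_norm x \<le> K2 * l1_norm (i m)"
      using K2 hom_to_perm_mem[OF i] by blast
    have "filling_norm Om' d m = filling_norm Om' d (d x)" by (simp add: x(2) retract)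
    also have "\<dots> \<le> l1_norm x" by (rule filling_norm_le[OF x(1)])
    finally show ?thesis using x(3) by linarith
  qed
  show ?thesis
  proof (intro exI[of _ "max K1 K2"] conjI allI)
    show "max K1 K2 > 0" using K1(1) by simp
    fix m
    show "l1_norm (i m) \<le> max K1 K2 * filling_norm Om' d m"
      using K1(2)[rule_format, of m] mult_right_mono[OF max.cobounded1 filling_norm_nonneg[OF surj]]
      by (rule order_trans)
    show "filling_norm Om' d m \<le> max K1 K2 * l1_norm (i m)"
      using upper mult_right_mono[OF max.cobounded2 l1_norm_nonneg] by (rule order_trans)
  qed
qed

theorem proposition4p4:
  fixes sm :: "rat \<Rightarrow> 'p::ab_group_add \<Rightarrow> 'p"
    and act :: "'g::{t2_space, topological_group_add} \<Rightarrow> 'p \<Rightarrow> 'p"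
    and Om0 :: "'v set" and a0 :: "'g \<Rightarrow> 'v \<Rightarrow> 'v"
    and i0 :: "'p \<Rightarrow> ('v \<Rightarrow> rat)" and p0 :: "('v \<Rightarrow> rat) \<Rightarrow> 'p"
  assumes "tdlc_group TYPE('g)"
    and "discrete_QG_module sm act"
    and "fin_gen_QG sm act"
    and "proper_G_set Om0 a0"
    and "direct_summand_of_perm Om0 a0 sm act i0 p0"
  shows
    "(\<forall>(Om :: 'w set) (a :: 'g \<Rightarrow> 'w \<Rightarrow> 'w) d.
        proper_G_set Om a \<and> finitely_many_orbits Om a \<and> hom_from_perm Om a sm act d \<and>
        d ` QPerm Om = UNIV \<longrightarrow>
        (\<forall>m. filling_norm Om d m = 0 \<longrightarrow> m = 0))
   \<and> (\<forall>(Om :: 'u set) (a :: 'g \<Rightarrow> 'u \<Rightarrow> 'u) i p.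
        proper_G_set Om a \<and> finitely_many_orbits Om a \<and> direct_summand_of_perm Om a sm act i p \<longrightarrow>
        (\<forall>(Om' :: 'w set) (a' :: 'g \<Rightarrow> 'w \<Rightarrow> 'w) d.
           proper_G_set Om' a' \<and> finitely_many_orbits Om' a' \<and> hom_from_perm Om' a' sm act d \<and>
           d ` QPerm Om' = UNIV \<longrightarrow>
           (\<exists>C>0. \<forall>m. l1_norm (i m) \<le> C * filling_norm Om' d m \<and>
                      filling_norm Om' d m \<le> C * l1_norm (i m))))"
  using assms(4,5)
  by (auto simp: proper_G_set_def intro: filling_norm_definite direct_summand_undistorted)

end
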